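(* Let $q>1$, $0<u<1$, let $T$ be a standard Young tableau of shape $\lambda$, and $N\ge0$. Let $P^N(T)$ be the probability that, at the end of interval $N$ of the Young Tableau Algorithm, the tableau obtained by numbering boxes in their order of creation is $T$. Then $P^N(T)=0$ if $\lambda$ has more than $N$ parts, and otherwise $$P^N(T)=\frac{u^{|T|}}{|GL(\lambda'_1,q)|}\cdot\frac{\prod_{r=1}^N(1-u/q^r)(1-1/q^r)}{\prod_{r=1}^{N-\lambda'_1}(1-1/q^r)}\cdot\prod_{(i,j)\in\lambda,\ j\ge2}\frac{q^{1-i}-q^{-A_{(i,j)}}}{q^{B_{(i,j)}}-1}.$$
   Context: $|GL(m,q)|=\prod_{k=0}^{m-1}(q^m-q^k)$. $\lambda'_s$ is the length of column $s$. $T_{(i,j)}$ is the entry of $T$ in row $i$, column $j$; for $j\ge2$, $A_{(i,j)}$ is the number of entries of column $j-1$ of $T$ that are less than $T_{(i,j)}$, and $B_{(i,j)}$ is the number of entries of column $1$ of $T$ less than $T_{(i,j)}$. Young Tableau Algorithm: coins indexed by $N\ge1$, coin $N$ showing heads with probability $u/q^N$, all flips independent. Start with $\lambda=\emptyset$, $N=1$. Flip coin $N$. If tails, interval $N$ ends; set $N\to N+1$ and flip the new coin. If heads, choose a column $S\ge1$ with $\Pr(S=1)=\frac{q^{N-\lambda'_1}-1}{q^N-1}$ and $\Pr(S=s)=\frac{q^{N-\lambda'_s}-q^{N-\lambda'_{s-1}}}{q^N-1}$ for $s>1$ (from the current $\lambda$), add a box at the bottom of column $S$, and flip coin $N$ again.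 The $k$-th box created receives the label $k$. *)

theory Defs
  imports Complex_Main
begin

text \<open>Partitions as weakly decreasing lists of positive parts; cells are (row, column),
  both 1-indexed.\<close>

definition is_partition :: "nat list \<Rightarrow> bool" where
  "is_partition lam \<longleftrightarrow> sorted_wrt (\<ge>) lam \<and> 0 \<notin> set lam"

definition cells :: "nat list \<Rightarrow> (nat \<times> nat) set" where
  "cells lam = {(i, j). 1 \<le> i \<and> i \<le> length lam \<and> 1 \<le> j \<and> j \<le> lam ! (i - 1)}"

definition psize :: "nat list \<Rightarrow> nat" where
  "psize lam = sum_list lam"

definition col_len :: "nat list \<Rightarrow> nat \<Rightarrow> nat" where
  "col_len lam j = card {i. (i, j) \<in> cells lam}"

definition is_SYT :: "nat list \<Rightarrow> (nat \<times> nat \<Rightarrow> nat) \<Rightarrow> bool" where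
  "is_SYT lam T \<longleftrightarrow> bij_betw T (cells lam) {1..psize lam}
     \<and> (\<forall>i j. (i, j + 1) \<in> cells lam \<longrightarrow> T (i, j) < T (i, j + 1))
     \<and> (\<forall>i j. (i + 1, j) \<in> cells lam \<longrightarrow> T (i, j) < T (i + 1, j))"

definition GL_card :: "nat \<Rightarrow> real \<Rightarrow> real" where
  "GL_card m q = (\<Prod>k<m. q ^ m - q ^ k)"

definition A_stat :: "nat list \<Rightarrow> (nat \<times> nat \<Rightarrow> nat) \<Rightarrow> nat \<times> nat \<Rightarrow> nat" where
  "A_stat lam T c = card {i'. (i', snd c - 1) \<in> cells lam \<and> T (i', snd c - 1) < T c}"

definition B_stat :: "nat list \<Rightarrow> (nat \<times> nat \<Rightarrow> nat) \<Rightarrow> nat \<times> nat \<Rightarrow> nat" where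
  "B_stat lam T c = card {i'. (i', 1) \<in> cells lam \<and> T (i', 1) < T c}"

definition cell_of :: "nat list \<Rightarrow> (nat \<times> nat \<Rightarrow> nat) \<Rightarrow> nat \<Rightarrow> nat \<times> nat" where
  "cell_of lam T k = (THE c. c \<in> cells lam \<and> T c = k)"

text \<open>Length of column s of the shape formed by the boxes with labels < k
  (the current shape just before box k is created).\<close>
definition col_before :: "nat list \<Rightarrow> (nat \<times> nat \<Rightarrow> nat) \<Rightarrow> nat \<Rightarrow> nat \<Rightarrow> nat" where
  "col_before lam T k s = card {i. (i, s) \<in> cells lam \<and> T (i, s) < k}"

text \<open>Probability that, during interval r, after a heads the column chosen for box k
  is the column of box k in T (given the current shape determined by T).\<close>
definition col_choice :: "real \<Rightarrow> nat list \<Rightarrow> (nat \<times> nat \<Rightarrow> nat) \<Rightarrow> nat \<Rightarrow> nat \<Rightarrow> real" where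
  "col_choice q lam T r k =
     (let s = snd (cell_of lam T k); L = col_before lam T k in
      if s = 1 then (q powi (int r - int (L 1)) - 1) / (q ^ r - 1)
      else (q powi (int r - int (L s)) - q powi (int r - int (L (s - 1)))) / (q ^ r - 1))"

text \<open>P^N(T): sum over all ways of distributing the n = |T| box creations among the
  intervals 1..N (weakly increasing list giving the interval of box k) of the
  probability of the corresponding sequence of coin flips and column choices;
  each interval r = 1..N ends with one tails of coin r.\<close>
definition PN :: "real \<Rightarrow> real \<Rightarrow> nat \<Rightarrow> nat list \<Rightarrow> (nat \<times> nat \<Rightarrow> nat) \<Rightarrow> real" where
  "PN q u N lam T =
     (\<Sum>iv \<in> {xs. length xs = psize lam \<and> sorted xs \<and> set xs \<subseteq> {1..N}}.
        (\<Prod>k\<in>{1..psize lam}. u / q ^ (iv ! (k - 1)) * col_choice q lam T (iv ! (k - 1)) k))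
     * (\<Prod>r\<in>{1..N}. 1 - u / q ^ r)"

end

theory Submission
  imports Defs
begin

text \<open>Summing over the intervals in which the boxes are created, \<open>P\<^sup>N(T)\<close> is a sum, over
  weakly increasing sequences of interval numbers, of products of one weight per box; as a
  function of the number \<open>k\<close> of boxes and of \<open>N\<close> this sum obeys a Pascal-type recurrence.
  The proposed closed form obeys the same recurrence: it is \<open>u\<^sup>k\<close>, times the factors of the
  boxes outside the first column, times \<open>\<Prod>i<m. 1 - q\<^sup>i / q\<^sup>N\<close> divided by \<open>|GL(m,q)|\<close>, where
  \<open>m\<close> is the current length of the first column. Checking this amounts to two q-identities,
  one for a box added to the first column (which increases \<open>m\<close>) and one for a box added
  elsewhere. The product over \<open>i < m\<close> vanishes when \<open>N < m\<close>, and for \<open>m \<le> N\<close> it is a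
  quotient of q-Pochhammer symbols.\<close>

definition q_poch :: "real \<Rightarrow> nat \<Rightarrow> real" where
  "q_poch q r = (\<Prod>t\<in>{1..r}. 1 - 1 / q ^ t)"

definition q_falling :: "real \<Rightarrow> nat \<Rightarrow> nat \<Rightarrow> real" where
  "q_falling q m r = (\<Prod>i<m. 1 - q ^ i / q ^ r)"

lemma q_poch_Suc: "q_poch q (Suc r) = q_poch q r * (1 - 1 / q ^ Suc r)"
  by (simp add: q_poch_def prod.cl_ivl_Suc)

lemma q_poch_pos: "q > 1 \<Longrightarrow> q_poch q r > 0"
  unfolding q_poch_def by (intro prod_pos) (simp add: one_less_power)

lemma q_falling_Suc_left: "q_falling q (Suc m) r = q_falling q m r * (1 - q ^ m / q ^ r)"
  by (simp add: q_falling_def)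

lemma q_falling_eq_0:
  assumes "q \<noteq> 0" "r < m"
  shows "q_falling q m r = 0"
  unfolding q_falling_def by (rule prod_zero) (use assms in auto)

lemma q_falling_eq_q_poch_div:
  assumes "q > 1" "m \<le> r"
  shows "q_falling q m r = q_poch q r / q_poch q (r - m)"
  using assms(2)
proof (induction m)
  case 0
  then show ?case using q_poch_pos[OF assms(1), of r] by (simp add: q_falling_def)
next
  case (Suc m)
  define d where "d = r - Suc m"
  have "r - m = Suc d" "q ^ m / q ^ r = 1 / q ^ Suc d"
    using Suc.prems assms(1) by (simp_all add: d_def power_diff Suc_diff_Suc)
  then show ?case
    using Suc q_poch_pos[OF assms(1), of d] q_poch_pos[OF assms(1), of "Suc d"]
    by (simp add: q_falling_Suc_left q_poch_Suc d_def field_simps)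
qed

lemma prod_power_diff_Suc:
  fixes q :: real
  shows "(\<Prod>i<m. q ^ Suc n - q ^ Suc i) = q ^ m * (\<Prod>i<m. q ^ n - q ^ i)"
proof -
  have "q ^ Suc n - q ^ Suc i = q * (q ^ n - q ^ i)" for i
    by (simp add: right_diff_distrib)
  then show ?thesis
    by (simp add: prod.distrib)
qed

lemma prod_power_diff_lessThan_Suc:
  fixes q :: real
  shows "(\<Prod>i<Suc m. q ^ Suc n - q ^ i) = (q ^ Suc n - 1) * q ^ m * (\<Prod>i<m. q ^ n - q ^ i)"
  by (subst prod.lessThan_Suc_shift) (simp only: prod_power_diff_Suc power_0 mult.assoc)

lemma q_falling_Suc_right:
  assumes "q \<noteq> 0"
  shows "q_falling q m (Suc r) * (q ^ Suc r - q ^ m) = q_falling q m r * (q ^ Suc r - 1)"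
proof -
  have unnormalized: "q_falling q m n = (\<Prod>i<m. q ^ n - q ^ i) / (q ^ n) ^ m" for n
  proof -
    have "1 - q ^ i / q ^ n = (q ^ n - q ^ i) / q ^ n" for i
      using assms by (simp add: diff_divide_distrib)
    then show ?thesis
      by (simp add: q_falling_def prod_dividef)
  qed
  have "(\<Prod>i<m. q ^ Suc r - q ^ i) * (q ^ Suc r - q ^ m)
      = (q ^ Suc r - 1) * q ^ m * (\<Prod>i<m. q ^ r - q ^ i)"
    by (metis prod.lessThan_Suc prod_power_diff_lessThan_Suc)
  then have "q_falling q m (Suc r) * (q ^ Suc r - q ^ m)
      = (q ^ Suc r - 1) * q ^ m * (\<Prod>i<m. q ^ r - q ^ i) / (q ^ Suc r) ^ m"
    unfolding unnormalized by simp
  also have "\<dots> = q_falling q m r * (q ^ Suc r - 1)"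
    using assms unfolding unnormalized by (simp add: power_mult_distrib)
  finally show ?thesis .
qed

lemma GL_card_Suc: "GL_card (Suc m) q = GL_card m q * q ^ m * (q ^ Suc m - 1)"
  by (simp only: GL_card_def prod_power_diff_lessThan_Suc ac_simps)

lemma GL_card_pos: "q > 1 \<Longrightarrow> GL_card m q > 0"
  unfolding GL_card_def by (intro prod_pos) (simp add: power_strict_increasing)

lemma q_falling_first_column_step:
  assumes q: "q > 1"
  shows "q_falling q (Suc m) (Suc r) / GL_card (Suc m) q
       = q_falling q (Suc m) r / GL_card (Suc m) q
         + (1 / q ^ m - 1 / q ^ Suc r) / (q ^ Suc r - 1) * (q_falling q m (Suc r) / GL_card m q)"
proof -
  have identity: "K * (1 - y / Q) / (G * y * (z - 1))
      = K * (1 - y / Q) * (Q - z) / (Q - 1) / (G * y * (z - 1)) + (1 / y - 1 / Q) / (Q - 1) * (K / G)"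
    if "Q \<noteq> 1" "z \<noteq> 1" "y \<noteq> 0" "G \<noteq> 0" "Q \<noteq> 0" for K Q y z G :: real
    using that by (simp add: divide_simps) algebra
  have Q: "1 < q ^ Suc r" and z: "1 < q ^ Suc m"
    using one_less_power[OF q] by blast+
  have "q_falling q (Suc m) r = q_falling q (Suc m) (Suc r) * (q ^ Suc r - q ^ Suc m) / (q ^ Suc r - 1)"
    using q_falling_Suc_right[of q "Suc m" r] q Q by (simp add: eq_divide_eq)
  then show ?thesis
    using identity[of "q ^ Suc r" "q ^ Suc m" "q ^ m" "GL_card m q" "q_falling q m (Suc r)"]
      q Q z GL_card_pos[OF q, of m]
    by (simp add: q_falling_Suc_left GL_card_Suc del: power_Suc)
qed

lemma q_falling_later_column_step:
  assumes q: "q > 1" and "0 < m"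
  shows "q_falling q m (Suc r) / (q ^ m - 1)
       = q_falling q m r / (q ^ m - 1) + q_falling q m (Suc r) / (q ^ Suc r - 1)"
proof -
  have "1 < q ^ Suc r" "1 < q ^ m"
    using one_less_power[OF q] assms(2) by blast+
  then have "q ^ Suc r - 1 \<noteq> 0" "q ^ m - 1 \<noteq> 0"
    by simp_all
  then have "q_falling q m (Suc r) / (q ^ m - 1) - q_falling q m (Suc r) / (q ^ Suc r - 1)
      = q_falling q m (Suc r) * (q ^ Suc r - q ^ m) / ((q ^ m - 1) * (q ^ Suc r - 1))"
    by (simp add: field_simps)
  also have "\<dots> = q_falling q m r / (q ^ m - 1)"
    using \<open>q ^ Suc r - 1 \<noteq> 0\<close> q by (simp add: q_falling_Suc_right del: power_Suc)
  finally show ?thesis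
    by simp
qed

definition sorted_seqs :: "nat \<Rightarrow> nat \<Rightarrow> nat list set" where
  "sorted_seqs k r = {xs. length xs = k \<and> sorted xs \<and> set xs \<subseteq> {1..r}}"

definition sorted_seq_sum :: "(nat \<Rightarrow> nat \<Rightarrow> real) \<Rightarrow> nat \<Rightarrow> nat \<Rightarrow> real" where
  "sorted_seq_sum f k r = (\<Sum>xs\<in>sorted_seqs k r. \<Prod>j\<in>{1..k}. f j (xs ! (j - 1)))"

lemma finite_sorted_seqs: "finite (sorted_seqs k r)"
proof -
  have "finite {xs. set xs \<subseteq> {1..r} \<and> length xs = k}"
    by (rule finite_lists_length_eq) simp
  then show ?thesis
    by (rule rev_finite_subset) (auto simp: sorted_seqs_def)
qed

lemma sorted_seqs_Suc_Suc:
  "sorted_seqs (Suc k) (Suc r)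
     = sorted_seqs (Suc k) r \<union> (\<lambda>xs. xs @ [Suc r]) ` sorted_seqs k (Suc r)"
proof (intro equalityI subsetI)
  fix xs assume "xs \<in> sorted_seqs (Suc k) (Suc r)"
  then obtain ys y where xs: "xs = ys @ [y]" and "length ys = k" "sorted xs" "set xs \<subseteq> {1..Suc r}"
    unfolding sorted_seqs_def by (metis (mono_tags) length_Suc_conv_rev mem_Collect_eq)
  then show "xs \<in> sorted_seqs (Suc k) r \<union> (\<lambda>xs. xs @ [Suc r]) ` sorted_seqs k (Suc r)"
    by (cases "y = Suc r") (force simp: sorted_seqs_def sorted_append le_Suc_eq)+
qed (force simp: sorted_seqs_def sorted_append)

lemma sorted_seq_sum_0: "sorted_seq_sum f 0 r = 1"
proof -
  have "sorted_seqs 0 r = {[]}"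
    by (auto simp: sorted_seqs_def)
  then show ?thesis
    by (simp add: sorted_seq_sum_def)
qed

lemma sorted_seq_sum_Suc_0: "sorted_seq_sum f (Suc k) 0 = 0"
proof -
  have "sorted_seqs (Suc k) 0 = {}"
    by (auto simp: sorted_seqs_def length_Suc_conv)
  then show ?thesis
    by (simp add: sorted_seq_sum_def)
qed

lemma sorted_seq_sum_Suc_Suc:
  "sorted_seq_sum f (Suc k) (Suc r)
     = sorted_seq_sum f (Suc k) r + f (Suc k) (Suc r) * sorted_seq_sum f k (Suc r)"
proof -
  let ?w = "\<lambda>k xs. \<Prod>j\<in>{1..k}. f j (xs ! (j - 1))"
  have append_weight: "?w (Suc k) (xs @ [Suc r]) = f (Suc k) (Suc r) * ?w k xs"
    if "xs \<in> sorted_seqs k (Suc r)" for xs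
  proof -
    have "length xs = k"
      using that by (simp add: sorted_seqs_def)
    moreover from this have "?w k (xs @ [Suc r]) = ?w k xs"
      by (intro prod.cong) (auto simp: nth_append)
    ultimately show ?thesis
      by (simp add: prod.cl_ivl_Suc nth_append)
  qed
  have "sorted_seqs (Suc k) r \<inter> (\<lambda>xs. xs @ [Suc r]) ` sorted_seqs k (Suc r) = {}"
    by (auto simp: sorted_seqs_def)
  then have "sorted_seq_sum f (Suc k) (Suc r)
      = sorted_seq_sum f (Suc k) r + (\<Sum>xs\<in>sorted_seqs k (Suc r). ?w (Suc k) (xs @ [Suc r]))"
    unfolding sorted_seq_sum_def sorted_seqs_Suc_Suc
    by (simp add: sum.union_disjoint finite_sorted_seqs sum.reindex inj_on_def)
  also have "(\<Sum>xs\<in>sorted_seqs k (Suc r). ?w (Suc k) (xs @ [Suc r]))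
      = f (Suc k) (Suc r) * sorted_seq_sum f k (Suc r)"
    unfolding sorted_seq_sum_def sum_distrib_left by (rule sum.cong[OF refl append_weight])
  finally show ?thesis .
qed

lemma sorted_seq_sum_Suc_first_column:
  assumes q: "q > 1"
    and IH: "\<And>r. sorted_seq_sum f k r = c * (q_falling q m r / GL_card m q)"
    and f: "f (Suc k) = (\<lambda>r. u * (1 / q ^ m - 1 / q ^ r) / (q ^ r - 1))"
  shows "sorted_seq_sum f (Suc k) r = u * c * (q_falling q (Suc m) r / GL_card (Suc m) q)"
proof (induction r)
  case 0
  then show ?case
    using q by (simp add: sorted_seq_sum_Suc_0 q_falling_eq_0)
next
  case (Suc r)
  have "sorted_seq_sum f (Suc k) (Suc r)
      = u * c * (q_falling q (Suc m) r / GL_card (Suc m) q)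
        + u * (1 / q ^ m - 1 / q ^ Suc r) / (q ^ Suc r - 1) * (c * (q_falling q m (Suc r) / GL_card m q))"
    by (simp only: sorted_seq_sum_Suc_Suc Suc IH f)
  also have "\<dots> = u * c * (q_falling q (Suc m) r / GL_card (Suc m) q
        + (1 / q ^ m - 1 / q ^ Suc r) / (q ^ Suc r - 1) * (q_falling q m (Suc r) / GL_card m q))"
    by (simp only: distrib_left ac_simps times_divide_eq_left times_divide_eq_right)
  also have "\<dots> = u * c * (q_falling q (Suc m) (Suc r) / GL_card (Suc m) q)"
    by (simp only: q_falling_first_column_step[OF q])
  finally show ?case .
qed

lemma sorted_seq_sum_Suc_later_column:
  assumes q: "q > 1" and "0 < m"
    and IH: "\<And>r. sorted_seq_sum f k r = c * (q_falling q m r / GL_card m q)"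
    and f: "f (Suc k) = (\<lambda>r. u * b / (q ^ r - 1))"
  shows "sorted_seq_sum f (Suc k) r = u * c * (b / (q ^ m - 1)) * (q_falling q m r / GL_card m q)"
proof (induction r)
  case 0
  then show ?case
    using assms by (simp add: sorted_seq_sum_Suc_0 q_falling_eq_0)
next
  case (Suc r)
  have "sorted_seq_sum f (Suc k) (Suc r)
      = u * c * (b / (q ^ m - 1)) * (q_falling q m r / GL_card m q)
        + u * b / (q ^ Suc r - 1) * (c * (q_falling q m (Suc r) / GL_card m q))"
    by (simp only: sorted_seq_sum_Suc_Suc Suc IH f)
  also have "\<dots> = u * c * b / GL_card m q
        * (q_falling q m r / (q ^ m - 1) + q_falling q m (Suc r) / (q ^ Suc r - 1))"
    by (simp add: algebra_simps)
  also have "\<dots> = u * c * (b / (q ^ m - 1)) * (q_falling q m (Suc r) / GL_card m q)"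
    by (subst q_falling_later_column_step[OF assms(1,2), symmetric]) (simp add: ac_simps)
  finally show ?case .
qed

text \<open>\<open>M j\<close> is the length of the first column just before box \<open>j\<close> is created, so the
  boxes of the first column are exactly those at which \<open>M\<close> increases.\<close>

lemma sorted_seq_sum_closed_form:
  fixes q u :: real and M :: "nat \<Rightarrow> nat" and a :: "nat \<Rightarrow> real"
  assumes q: "q > 1" and M_1: "M 1 = 0"
    and steps: "\<And>j. j \<in> {1..n} \<Longrightarrow>
        (M (Suc j) = Suc (M j) \<and> f j = (\<lambda>r. u * (1 / q ^ M j - 1 / q ^ r) / (q ^ r - 1)))
      \<or> (M (Suc j) = M j \<and> 0 < M j \<and> f j = (\<lambda>r. u * a j / (q ^ r - 1)))"
    and "k \<le> n"
  shows "sorted_seq_sum f k r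
      = u ^ k * (\<Prod>j | j \<in> {1..k} \<and> M (Suc j) = M j. a j / (q ^ M j - 1))
        * (q_falling q (M (Suc k)) r / GL_card (M (Suc k)) q)"
  using \<open>k \<le> n\<close>
proof (induction k arbitrary: r)
  case 0
  then show ?case
    using M_1 by (simp add: sorted_seq_sum_0 q_falling_def GL_card_def)
next
  case (Suc k)
  define C where "C k = (\<Prod>j | j \<in> {1..k} \<and> M (Suc j) = M j. a j / (q ^ M j - 1))" for k
  have IH: "sorted_seq_sum f k r = u ^ k * C k * (q_falling q (M (Suc k)) r / GL_card (M (Suc k)) q)" for r
    using Suc by (simp add: C_def)
  have C_Suc: "C (Suc k)
      = C k * (if M (Suc (Suc k)) = M (Suc k) then a (Suc k) / (q ^ M (Suc k) - 1) else 1)"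
  proof -
    have "{j. j \<in> {1..Suc k} \<and> M (Suc j) = M j}
        = {j. j \<in> {1..k} \<and> M (Suc j) = M j}
          \<union> (if M (Suc (Suc k)) = M (Suc k) then {Suc k} else {})"
      by (auto simp: le_Suc_eq)
    then show ?thesis
      by (simp add: C_def mult.commute)
  qed
  have "Suc k \<in> {1..n}"
    using Suc.prems by simp
  from steps[OF this]
  have "sorted_seq_sum f (Suc k) r
      = u ^ Suc k * C (Suc k) * (q_falling q (M (Suc (Suc k))) r / GL_card (M (Suc (Suc k))) q)"
  proof (elim disjE conjE)
    assume "M (Suc (Suc k)) = Suc (M (Suc k))"
      and "f (Suc k) = (\<lambda>r. u * (1 / q ^ M (Suc k) - 1 / q ^ r) / (q ^ r - 1))"
    with sorted_seq_sum_Suc_first_column[OF q IH] show ?thesis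
      by (simp add: C_Suc)
  next
    assume "M (Suc (Suc k)) = M (Suc k)" "0 < M (Suc k)"
      and "f (Suc k) = (\<lambda>r. u * a (Suc k) / (q ^ r - 1))"
    with sorted_seq_sum_Suc_later_column[OF q _ IH] show ?thesis
      by (simp add: C_Suc ac_simps)
  qed
  then show ?case
    by (simp only: C_def)
qed

lemma cells_left: "(i, j') \<in> cells lam \<Longrightarrow> 1 \<le> j \<Longrightarrow> j \<le> j' \<Longrightarrow> (i, j) \<in> cells lam"
  by (auto simp: cells_def)

lemma cells_up:
  assumes "is_partition lam" "(i', j) \<in> cells lam" "1 \<le> i" "i \<le> i'"
  shows "(i, j) \<in> cells lam"
proof -
  have "lam ! (i' - 1) \<le> lam ! (i - 1)"
    using assms sorted_wrt_nth_less[of "(\<ge>)" lam "i - 1" "i' - 1"]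
    by (cases "i = i'") (auto simp: is_partition_def cells_def)
  then show ?thesis
    using assms by (auto simp: cells_def)
qed

lemma col_len_1:
  assumes "is_partition lam"
  shows "col_len lam 1 = length lam"
proof -
  have "lam ! (i - 1) \<noteq> 0" if "i \<in> {1..length lam}" for i
  proof -
    have "lam ! (i - 1) \<in> set lam"
      using that by (intro nth_mem) auto
    then show ?thesis
      using assms by (metis is_partition_def)
  qed
  then have "{i. (i, 1) \<in> cells lam} = {1..length lam}"
    by (auto simp: cells_def Suc_le_eq)
  then show ?thesis
    by (simp add: col_len_def)
qed

locale standard_tableau =
  fixes lam :: "nat list" and T :: "nat \<times> nat \<Rightarrow> nat"
  assumes partition: "is_partition lam" and SYT: "is_SYT lam T"
begin

lemma labels: "T ` cells lam = {1..psize lam}" and inj_labels: "inj_on T (cells lam)"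
  using SYT by (simp_all add: is_SYT_def bij_betw_def)

lemma cell_of_label: "c \<in> cells lam \<Longrightarrow> cell_of lam T (T c) = c"
  unfolding cell_of_def using inj_labels by (auto dest: inj_onD)

lemma row_step: "(i, Suc j) \<in> cells lam \<Longrightarrow> T (i, j) < T (i, Suc j)"
  and column_step: "(Suc i, j) \<in> cells lam \<Longrightarrow> T (i, j) < T (Suc i, j)"
  using SYT unfolding is_SYT_def Suc_eq_plus1 by blast+

lemma row_increasing:
  assumes "1 \<le> j" "j < j'" "(i, j') \<in> cells lam"
  shows "T (i, j) < T (i, j')"
  using Suc_leI[OF \<open>j < j'\<close>] \<open>(i, j') \<in> cells lam\<close>
proof (induction j' rule: dec_induct)
  case base
  then show ?case
    by (rule row_step)
next
  case (step n)
  have "(i, n) \<in> cells lam"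
    using cells_left[OF step.prems, of n] step.hyps by simp
  then show ?case
    using step.IH row_step[OF step.prems] by simp
qed

lemma column_increasing:
  assumes "1 \<le> i" "i < i'" "(i', j) \<in> cells lam"
  shows "T (i, j) < T (i', j)"
  using Suc_leI[OF \<open>i < i'\<close>] \<open>(i', j) \<in> cells lam\<close>
proof (induction i' rule: dec_induct)
  case base
  then show ?case
    by (rule column_step)
next
  case (step n)
  have "(n, j) \<in> cells lam"
    using cells_up[OF partition step.prems, of n] step.hyps assms(1) by simp
  then show ?case
    using step.IH column_step[OF step.prems] by simp
qed

lemma label_pos: "c \<in> cells lam \<Longrightarrow> 1 \<le> T c"
  and label_le_size: "c \<in> cells lam \<Longrightarrow> T c \<le> psize lam"
  using labels by auto

lemma col_before_1: "col_before lam T 1 s = 0"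
proof -
  have "{i. (i, s) \<in> cells lam \<and> T (i, s) < 1} = {}"
    by (auto dest: label_pos)
  then show ?thesis
    unfolding col_before_def by (simp only: card.empty)
qed

lemma col_before_end: "col_before lam T (Suc (psize lam)) s = col_len lam s"
proof -
  have "{i. (i, s) \<in> cells lam \<and> T (i, s) < Suc (psize lam)} = {i. (i, s) \<in> cells lam}"
    by (auto dest: label_le_size)
  then show ?thesis
    by (simp add: col_before_def col_len_def)
qed

lemma col_before_label:
  assumes "(i, s) \<in> cells lam"
  shows "col_before lam T (T (i, s)) s = i - 1"
proof -
  have "{i'. (i', s) \<in> cells lam \<and> T (i', s) < T (i, s)} = {1..<i}"
  proof (intro equalityI subsetI)
    fix i' assume i': "i' \<in> {i'. (i', s) \<in> cells lam \<and> T (i', s) < T (i, s)}"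
    then have "1 \<le> i'"
      by (simp add: cells_def)
    moreover have "\<not> i < i'" "i \<noteq> i'"
      using i' column_increasing[of i i' s] assms by (auto simp: cells_def)
    ultimately show "i' \<in> {1..<i}"
      by simp
  next
    fix i' assume "i' \<in> {1..<i}"
    then show "i' \<in> {i'. (i', s) \<in> cells lam \<and> T (i', s) < T (i, s)}"
      using cells_up[OF partition assms] column_increasing[OF _ _ assms] by simp
  qed
  then show ?thesis
    by (simp add: col_before_def)
qed

lemma col_before_Suc_label:
  assumes "c \<in> cells lam"
  shows "col_before lam T (Suc (T c)) 1 = col_before lam T (T c) 1 + (if snd c = 1 then 1 else 0)"
proof -
  let ?before = "{i. (i, 1) \<in> cells lam \<and> T (i, 1) < T c}"
  have "{i. (i, 1) \<in> cells lam \<and> T (i, 1) < Suc (T c)}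
      = ?before \<union> {i. (i, 1) \<in> cells lam \<and> T (i, 1) = T c}"
    by (auto simp: less_Suc_eq)
  also have "{i. (i, 1) \<in> cells lam \<and> T (i, 1) = T c} = {i. (i, 1) = c}"
  proof (rule Collect_cong)
    fix i
    show "(i, 1) \<in> cells lam \<and> T (i, 1) = T c \<longleftrightarrow> (i, 1) = c"
      using assms inj_onD[OF inj_labels, of "(i, 1)" c] by metis
  qed
  also have "\<dots> = (if snd c = 1 then {fst c} else {})"
    by (cases c) auto
  finally have "{i. (i, 1) \<in> cells lam \<and> T (i, 1) < Suc (T c)}
      = ?before \<union> (if snd c = 1 then {fst c} else {})" .
  moreover have "finite ?before"
    by (rule finite_subset[of _ "{1..length lam}"]) (auto simp: cells_def)
  moreover have "snd c = 1 \<Longrightarrow> fst c \<notin> ?before"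
    by (cases c) simp
  ultimately show ?thesis
    unfolding col_before_def by (cases "snd c = 1") simp_all
qed

lemma col_before_first_column_pos:
  assumes "c \<in> cells lam" "snd c \<noteq> 1"
  shows "0 < col_before lam T (T c) 1"
proof -
  obtain i s where c: "c = (i, s)" and "1 < s"
    using assms by (cases c) (auto simp: cells_def)
  then have "i \<in> {i'. (i', 1) \<in> cells lam \<and> T (i', 1) < T c}"
    using assms cells_left[of i s lam 1] row_increasing[of 1 s i] by simp
  moreover have "finite {i'. (i', 1) \<in> cells lam \<and> T (i', 1) < T c}"
    by (rule finite_subset[of _ "{1..length lam}"]) (auto simp: cells_def)
  ultimately show ?thesis
    unfolding col_before_def by (auto simp: card_gt_0_iff)
qed

lemma col_choice_first_column:
  assumes "q \<noteq> 0" "c \<in> cells lam" "snd c = 1"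
  shows "u / q ^ r * col_choice q lam T r (T c)
       = u * (1 / q ^ col_before lam T (T c) 1 - 1 / q ^ r) / (q ^ r - 1)"
  using assms by (simp add: col_choice_def cell_of_label power_int_diff Let_def field_simps)

lemma col_choice_later_column:
  assumes "q \<noteq> 0" "(i, s) \<in> cells lam" "s \<noteq> 1"
  shows "u / q ^ r * col_choice q lam T r (T (i, s))
       = u * (q powi (1 - int i) - q powi (- int (A_stat lam T (i, s)))) / (q ^ r - 1)"
proof -
  have "1 \<le> i"
    using assms(2) by (simp add: cells_def)
  then have "q powi (int r - int (i - 1)) = q powi (int r + (1 - int i))"
    by (simp add: of_nat_diff algebra_simps)
  also have "\<dots> = q ^ r * q powi (1 - int i)"
    using assms(1) by (subst power_int_add) simp_all
  moreover have "q powi (int r - int (A_stat lam T (i, s))) = q ^ r * q powi (- int (A_stat lam T (i, s)))"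
    using assms(1) by (subst diff_conv_add_uminus, subst power_int_add) simp_all
  moreover have "col_before lam T (T (i, s)) (s - 1) = A_stat lam T (i, s)"
    by (simp add: A_stat_def col_before_def)
  ultimately show ?thesis
    using assms by (simp add: col_choice_def cell_of_label col_before_label Let_def
        right_diff_distrib[symmetric])
qed

lemma later_column_labels:
  "{j. j \<in> {1..psize lam} \<and> col_before lam T (Suc j) 1 = col_before lam T j 1}
     = T ` {c \<in> cells lam. 2 \<le> snd c}"
proof (intro equalityI subsetI)
  fix j assume j: "j \<in> {j. j \<in> {1..psize lam} \<and> col_before lam T (Suc j) 1 = col_before lam T j 1}"
  then obtain c where c: "c \<in> cells lam" "j = T c"
    using labels by blast
  moreover have "1 \<le> snd c"
    using c by (auto simp: cells_def)
  ultimately show "j \<in> T ` {c \<in> cells lam. 2 \<le> snd c}"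
    using j col_before_Suc_label[OF c(1)] by (auto split: if_splits)
next
  fix j assume "j \<in> T ` {c \<in> cells lam. 2 \<le> snd c}"
  then obtain c where "c \<in> cells lam" "2 \<le> snd c" "j = T c"
    by blast
  then show "j \<in> {j. j \<in> {1..psize lam} \<and> col_before lam T (Suc j) 1 = col_before lam T j 1}"
    using labels col_before_Suc_label by auto
qed

lemma PN_closed_form:
  assumes q: "q > 1"
  shows "PN q u N lam T = u ^ psize lam
      * (\<Prod>c\<in>{c \<in> cells lam. 2 \<le> snd c}.
           (q powi (1 - int (fst c)) - q powi (- int (A_stat lam T c))) / (q ^ B_stat lam T c - 1))
      * (q_falling q (length lam) N / GL_card (length lam) q) * (\<Prod>r\<in>{1..N}. 1 - u / q ^ r)"
proof -
  define M where "M j = col_before lam T j 1" for j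
  define f where "f j r = u / q ^ r * col_choice q lam T r j" for j r
  define a where "a j = (let c = cell_of lam T j in
      q powi (1 - int (fst c)) - q powi (- int (A_stat lam T c)))" for j
  have M_1: "M 1 = 0"
    unfolding M_def by (rule col_before_1)
  have q0: "q \<noteq> 0"
    using q by simp
  have steps: "(M (Suc j) = Suc (M j) \<and> f j = (\<lambda>r. u * (1 / q ^ M j - 1 / q ^ r) / (q ^ r - 1)))
      \<or> (M (Suc j) = M j \<and> 0 < M j \<and> f j = (\<lambda>r. u * a j / (q ^ r - 1)))"
    if label: "j \<in> {1..psize lam}" for j
  proof -
    obtain i s where c: "(i, s) \<in> cells lam" and j: "j = T (i, s)"
      using label labels by force
    show ?thesis
    proof (cases "s = 1")
      case True
      then show ?thesis
        using col_before_Suc_label[OF c] col_choice_first_column[OF q0 c]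
        by (simp add: M_def f_def fun_eq_iff j)
    next
      case False
      then show ?thesis
        using col_before_Suc_label[OF c] col_before_first_column_pos[OF c] col_choice_later_column[OF q0 c]
        by (simp add: M_def f_def a_def fun_eq_iff j cell_of_label[OF c])
    qed
  qed
  have "PN q u N lam T = sorted_seq_sum f (psize lam) N * (\<Prod>r\<in>{1..N}. 1 - u / q ^ r)"
    by (simp add: PN_def sorted_seq_sum_def sorted_seqs_def f_def)
  also have "sorted_seq_sum f (psize lam) N
      = u ^ psize lam * (\<Prod>j | j \<in> {1..psize lam} \<and> M (Suc j) = M j. a j / (q ^ M j - 1))
        * (q_falling q (M (Suc (psize lam))) N / GL_card (M (Suc (psize lam))) q)"
    by (rule sorted_seq_sum_closed_form[where M = M and f = f and a = a and u = u and n = "psize lam",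
          OF q M_1 steps order_refl])
  also have "(\<Prod>j | j \<in> {1..psize lam} \<and> M (Suc j) = M j. a j / (q ^ M j - 1))
      = (\<Prod>c\<in>{c \<in> cells lam. 2 \<le> snd c}.
           (q powi (1 - int (fst c)) - q powi (- int (A_stat lam T c))) / (q ^ B_stat lam T c - 1))"
    unfolding M_def later_column_labels
    by (subst prod.reindex) (auto intro: inj_on_subset[OF inj_labels]
        simp: a_def cell_of_label B_stat_def col_before_def)
  also have "M (Suc (psize lam)) = length lam"
    unfolding M_def col_before_end by (rule col_len_1[OF partition])
  finally show ?thesis .
qed

end

theorem theorem5:
  fixes q u :: real and lam :: "nat list" and T :: "nat \<times> nat \<Rightarrow> nat" and N :: nat
  assumes "q > 1" and "0 < u" and "u < 1"
    and "is_partition lam" and "is_SYT lam T"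
  shows "(length lam > N \<longrightarrow> PN q u N lam T = 0)
       \<and> (length lam \<le> N \<longrightarrow>
          PN q u N lam T =
            u ^ psize lam / GL_card (col_len lam 1) q
            * ((\<Prod>r\<in>{1..N}. (1 - u / q ^ r) * (1 - 1 / q ^ r))
               / (\<Prod>r\<in>{1..N - col_len lam 1}. 1 - 1 / q ^ r))
            * (\<Prod>c\<in>{c \<in> cells lam. 2 \<le> snd c}.
                 (q powi (1 - int (fst c)) - q powi (- int (A_stat lam T c)))
                 / (q ^ B_stat lam T c - 1)))"
proof -
  \<comment> \<open>The identity is algebraic in \<open>u\<close>: \<open>0 < u < 1\<close> only matters for the
    probabilistic reading.\<close>
  interpret standard_tableau lam T
    using assms(4,5) by unfold_locales
  show ?thesis
    unfolding PN_closed_form[OF \<open>q > 1\<close>] col_len_1[OF partition] prod.distrib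
      q_poch_def[symmetric]
    using \<open>q > 1\<close> by (auto simp: q_falling_eq_0 q_falling_eq_q_poch_div field_simps)
qed

end
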